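(* For every integer $n\ge 3$, the prism graph $P_2\,\square\,C_n$ (of order $2n$) is not orientable $\mathbb{Z}_{2n}$-distance magic.
   Context: $P_2$ is the path on 2 vertices and $C_n$ the cycle on $n$ vertices. The Cartesian product $G\,\square\,H$ has vertex set $V(G)\times V(H)$, with $(g,h)$ adjacent to $(g',h')$ iff either $g=g'$ and $h$ is adjacent to $h'$ in $H$, or $h=h'$ and $g$ is adjacent to $g'$ in $G$. For an oriented graph $\vec G$ and a vertex $x$, $N^+(x)$ is the set of vertices $y$ with an arc from $x$ to $y$, and $N^-(x)$ is the set of vertices $y$ with an arc from $y$ to $x$. For an Abelian group $\Gamma$ of order $n$, a directed $\Gamma$-distance magic labeling of an oriented graph $\vec G$ of order $n$ is a bijection $\vec l:V\to\Gamma$ such that there is $\mu\in\Gamma$ with $\sum_{y\in N^+(x)}\vec l(y)-\sum_{y\in N^-(x)}\vec l(y)=\mu$ for every vertex $x$. A simple graph $G$ of order $n$ is orientable $\Gamma$-distance magic if some orientation of its edges admits a directed $\Gamma$-distance magic labeling. $\mathbb{Z}_n$ is the cyclic group of integers modulo $n$. *)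

theory Defs
  imports Main
begin

text \<open>A simple graph is given by a vertex set V and a symmetric irreflexive
edge relation E (only its restriction to V matters).\<close>

definition is_orientation :: "'a set \<Rightarrow> ('a \<Rightarrow> 'a \<Rightarrow> bool) \<Rightarrow> ('a \<times> 'a) set \<Rightarrow> bool" where
  "is_orientation V E A \<longleftrightarrow>
     A \<subseteq> {(x, y). x \<in> V \<and> y \<in> V \<and> E x y} \<and>
     (\<forall>x\<in>V. \<forall>y\<in>V. E x y \<longrightarrow> ((x, y) \<in> A \<longleftrightarrow> (y, x) \<notin> A))"

definition out_nbrs :: "('a \<times> 'a) set \<Rightarrow> 'a \<Rightarrow> 'a set" where
  "out_nbrs A x = {y. (x, y) \<in> A}"

definition in_nbrs :: "('a \<times> 'a) set \<Rightarrow> 'a \<Rightarrow> 'a set" where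
  "in_nbrs A x = {y. (y, x) \<in> A}"

definition directed_Zm_distance_magic_labeling ::
  "nat \<Rightarrow> 'a set \<Rightarrow> ('a \<times> 'a) set \<Rightarrow> ('a \<Rightarrow> int) \<Rightarrow> bool" where
  "directed_Zm_distance_magic_labeling m V A l \<longleftrightarrow>
     bij_betw l V {0..<int m} \<and>
     (\<exists>\<mu>. \<forall>x\<in>V.
        ((\<Sum>y\<in>out_nbrs A x. l y) - (\<Sum>y\<in>in_nbrs A x. l y)) mod int m = \<mu> mod int m)"

definition orientable_Zm_distance_magic :: "nat \<Rightarrow> 'a set \<Rightarrow> ('a \<Rightarrow> 'a \<Rightarrow> bool) \<Rightarrow> bool" where
  "orientable_Zm_distance_magic m V E \<longleftrightarrow>
     (\<exists>A l. is_orientation V E A \<and> directed_Zm_distance_magic_labeling m V A l)"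

definition prism_vertices :: "nat \<Rightarrow> (nat \<times> nat) set" where
  "prism_vertices n = {0, 1} \<times> {0..<n}"

definition prism_edge :: "nat \<Rightarrow> nat \<times> nat \<Rightarrow> nat \<times> nat \<Rightarrow> bool" where
  "prism_edge n u v \<longleftrightarrow>
     (fst u = fst v \<and> (snd v = (snd u + 1) mod n \<or> snd u = (snd v + 1) mod n)) \<or>
     (snd u = snd v \<and> fst u \<noteq> fst v)"

end

theory Submission
  imports Defs
begin

text \<open>Let w(x) be the label sum over the out-neighbours of x minus that over its in-neighbours.
  Summing l(x) w(x) over all vertices gives 0, as each arc (x, y) contributes
  l(x) l(y) - l(y) l(x). Since w(x) = \<mu> (mod 2n) and the labels sum to n(2n - 1), 2n divides
  \<mu> n, so \<mu> and hence every w(x) is even: the labels of the neighbours of each vertex have an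
  even sum. In the prism this says that the parities a_j, b_j of the labels on the two cycles
  satisfy a_j + a_(j+2) + b_(j+1) = b_j + b_(j+2) + a_(j+1) = 0 (mod 2), while exactly n of the
  2n labels are odd. These relations force b_j = a_(j+3) and make a 6-periodic with an even
  number of ones in any 6 consecutive places; but then exactly half of the a_j are ones, which
  means 3 ones in every such window.\<close>

definition dir_weight :: "('a \<times> 'a) set \<Rightarrow> ('a \<Rightarrow> int) \<Rightarrow> 'a \<Rightarrow> int" where
  "dir_weight A l x = (\<Sum>y\<in>out_nbrs A x. l y) - (\<Sum>y\<in>in_nbrs A x. l y)"

lemma orientation_subset_Times: "is_orientation V E A \<Longrightarrow> A \<subseteq> V \<times> V"
  unfolding is_orientation_def by auto

lemma sum_mult_dir_weight_eq_0:
  assumes "finite V" and "A \<subseteq> V \<times> V"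
  shows "(\<Sum>x\<in>V. l x * dir_weight A l x) = 0"
proof -
  have fin: "finite (out_nbrs A x)" "finite (in_nbrs A x)" for x
    using assms by (auto intro: finite_subset simp: out_nbrs_def in_nbrs_def)
  have "Sigma V (out_nbrs A) = A" "Sigma V (in_nbrs A) = prod.swap ` A"
    using assms(2) by (auto simp: out_nbrs_def in_nbrs_def)
  then have "(\<Sum>x\<in>V. \<Sum>y\<in>out_nbrs A x. l x * l y) = (\<Sum>(x, y)\<in>A. l x * l y)"
    and "(\<Sum>x\<in>V. \<Sum>y\<in>in_nbrs A x. l x * l y) = (\<Sum>(x, y)\<in>A. l y * l x)"
    using sum.Sigma[OF assms(1), of _ "\<lambda>x y. l x * l y"] fin
    by (simp_all add: sum.reindex case_prod_beta)
  then show ?thesis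
    by (simp add: dir_weight_def right_diff_distrib sum_distrib_left sum_subtractf mult.commute)
qed

lemma sum_bij_betw_atLeastLessThan_int:
  assumes "bij_betw l V {0..<int m}"
  shows "(\<Sum>x\<in>V. g (l x)) = (\<Sum>k<m. g (int k))"
proof -
  have "(\<Sum>x\<in>V. g (l x)) = sum g {0..<int m}" using sum.reindex_bij_betw[OF assms] by simp
  also have "\<dots> = sum g (int ` {..<m})" using image_atLeastZeroLessThan_int[of "int m"] by simp
  also have "\<dots> = (\<Sum>k<m. g (int k))" by (simp add: sum.reindex)
  finally show ?thesis .
qed

lemma double_sum_lessThan_int: "2 * (\<Sum>k<m. int k) = int m * (int m - 1)"
  by (induction m) (simp_all add: algebra_simps)

lemma sum_lessThan_double_mod_2: "(\<Sum>k<2 * n. int k mod 2) = int n"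
  by (induction n) (simp_all add: mod_Suc_eq)

lemma dir_weight_even:
  assumes "finite V" and "A \<subseteq> V \<times> V" and "n > 0"
    and "directed_Zm_distance_magic_labeling (2 * n) V A l" and "x \<in> V"
  shows "even (dir_weight A l x)"
proof -
  obtain \<mu> where bij: "bij_betw l V {0..<int (2 * n)}"
    and \<mu>: "\<And>x. x \<in> V \<Longrightarrow> int (2 * n) dvd dir_weight A l x - \<mu>"
    using assms(4) unfolding directed_Zm_distance_magic_labeling_def dir_weight_def
    by (auto simp: mod_eq_dvd_iff)
  have "int (2 * n) dvd (\<Sum>x\<in>V. l x * (dir_weight A l x - \<mu>))"
    by (intro dvd_sum dvd_mult \<mu>)
  also have "(\<Sum>x\<in>V. l x * (dir_weight A l x - \<mu>)) = - (\<mu> * (\<Sum>x\<in>V. l x))"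
    using sum_mult_dir_weight_eq_0[OF assms(1,2)]
    by (simp add: right_diff_distrib sum_subtractf sum_distrib_left mult.commute)
  also have "(\<Sum>x\<in>V. l x) = int n * (2 * int n - 1)"
    using sum_bij_betw_atLeastLessThan_int[OF bij, of id] double_sum_lessThan_int[of "2 * n"]
    by simp
  finally have "int (2 * n) dvd int (2 * n) * (\<mu> * int n) - \<mu> * (int n * (2 * int n - 1))"
    by simp
  then have "2 * int n dvd \<mu> * int n" by (simp add: algebra_simps)
  then have "even \<mu>" using \<open>n > 0\<close> by (simp add: mult.commute)
  then show ?thesis using \<mu>[OF assms(5)] by (auto dest: dvd_mult_left)
qed

lemma sum_nbrs_eq_out_plus_in:
  assumes "is_orientation V E A" and "\<And>x y. E x y \<Longrightarrow> E y x" and "finite V" and "x \<in> V"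
  shows "(\<Sum>y\<in>{y \<in> V. E x y}. f y) = (\<Sum>y\<in>out_nbrs A x. f y) + (\<Sum>y\<in>in_nbrs A x. f y)"
proof -
  have "{y \<in> V. E x y} = out_nbrs A x \<union> in_nbrs A x"
    and "out_nbrs A x \<inter> in_nbrs A x = {}"
    using assms unfolding is_orientation_def out_nbrs_def in_nbrs_def by blast+
  moreover have "finite (out_nbrs A x)" "finite (in_nbrs A x)"
    using assms orientation_subset_Times[OF assms(1)]
    by (auto intro: finite_subset simp: out_nbrs_def in_nbrs_def)
  ultimately show ?thesis by (simp add: sum.union_disjoint)
qed

lemma sum_nbrs_label_even:
  assumes "is_orientation V E A" and "\<And>x y. E x y \<Longrightarrow> E y x" and "finite V" and "n > 0"
    and "directed_Zm_distance_magic_labeling (2 * n) V A l" and "x \<in> V"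
  shows "even (\<Sum>y\<in>{y \<in> V. E x y}. l y)"
proof -
  have "(\<Sum>y\<in>{y \<in> V. E x y}. l y) = dir_weight A l x + 2 * (\<Sum>y\<in>in_nbrs A x. l y)"
    using sum_nbrs_eq_out_plus_in[OF assms(1-3,6), of l] unfolding dir_weight_def by linarith
  then show ?thesis
    using dir_weight_even[OF assms(3) orientation_subset_Times[OF assms(1)] assms(4-6)] by simp
qed

lemma prism_edge_sym: "prism_edge n u v \<Longrightarrow> prism_edge n v u"
  unfolding prism_edge_def by auto

lemma sum_prism_vertices: "(\<Sum>x\<in>prism_vertices n. f x) = (\<Sum>j<n. f (0, j)) + (\<Sum>j<n. f (1, j))"
  by (simp add: prism_vertices_def sum.cartesian_product' atLeast0LessThan)

lemma Suc_mod_eq_Suc_mod_iff: "Suc j mod n = Suc k mod n \<longleftrightarrow> j mod n = k mod (n::nat)"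
  by (simp add: mod_eq_iff_dvd_symdiff_nat)

lemma prism_nbrs:
  assumes "n > 0" and "i \<le> 1"
  shows "{y \<in> prism_vertices n. prism_edge n (i, (j + 1) mod n) y}
         = {(i, j mod n), (i, (j + 2) mod n), (1 - i, (j + 1) mod n)}"
proof (intro set_eqI iffI)
  fix y assume "y \<in> {y \<in> prism_vertices n. prism_edge n (i, (j + 1) mod n) y}"
  then obtain i' k where y: "y = (i', k)" "i' \<le> 1" "k < n"
    and e: "prism_edge n (i, (j + 1) mod n) (i', k)"
    by (auto simp: prism_vertices_def)
  have "k = ((j + 1) mod n + 1) mod n \<longleftrightarrow> k = (j + 2) mod n"
    by (simp add: mod_Suc_eq)
  moreover have "(j + 1) mod n = (k + 1) mod n \<longleftrightarrow> k = j mod n"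
    using Suc_mod_eq_Suc_mod_iff[of j n k] \<open>k < n\<close> by auto
  moreover have "i \<noteq> i' \<longleftrightarrow> i' = 1 - i" using assms y by arith
  ultimately show "y \<in> {(i, j mod n), (i, (j + 2) mod n), (1 - i, (j + 1) mod n)}"
    using e y unfolding prism_edge_def fst_conv snd_conv by auto
next
  fix y assume "y \<in> {(i, j mod n), (i, (j + 2) mod n), (1 - i, (j + 1) mod n)}"
  moreover have "((j + 1) mod n + 1) mod n = (j + 2) mod n" by (simp add: mod_Suc_eq)
  moreover have "1 - i \<noteq> i" using assms by arith
  ultimately show "y \<in> {y \<in> prism_vertices n. prism_edge n (i, (j + 1) mod n) y}"
    using assms by (auto simp: prism_vertices_def prism_edge_def mod_Suc_eq)
qed

lemma mod_neq_add_2_mod: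
  assumes "n \<ge> 3"
  shows "j mod n \<noteq> (j + 2) mod (n::nat)"
proof
  assume "j mod n = (j + 2) mod n"
  then have "n dvd 2" using mod_eq_dvd_iff_nat[of j "j + 2" n] by simp
  then show False using assms by (auto dest: dvd_imp_le)
qed

lemma sum_prism_nbrs:
  assumes "n \<ge> 3" and "i \<le> 1"
  shows "(\<Sum>y\<in>{y \<in> prism_vertices n. prism_edge n (i, (j + 1) mod n) y}. f y)
         = f (i, j mod n) + f (i, (j + 2) mod n) + f (1 - i, (j + 1) mod n)"
proof -
  have "n > 0" "1 - i \<noteq> i" using assms by arith+
  then show ?thesis
    unfolding prism_nbrs[OF \<open>n > 0\<close> assms(2)]
    using mod_neq_add_2_mod[OF assms(1), of j] by (simp add: add.assoc)
qed
lemma sum_lessThan_shift_periodic: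
  fixes f :: "nat \<Rightarrow> 'a::cancel_comm_monoid_add"
  assumes "\<And>j. f (j + p) = f j"
  shows "(\<Sum>j<p. f (j + k)) = (\<Sum>j<p. f j)"
proof (induction k)
  case (Suc k)
  have "f k + (\<Sum>j<p. f (j + Suc k)) = (\<Sum>j<Suc p. f (j + k))"
    by (subst sum.lessThan_Suc_shift) simp
  also have "\<dots> = (\<Sum>j<p. f (j + k)) + f k"
    using assms[of k] by (simp add: add.commute)
  finally show ?case using Suc by (simp add: add.commute)
qed simp

lemma prism_parity_pattern_impossible:
  fixes a b :: "nat \<Rightarrow> int"
  assumes "n > 0"
    and a01: "\<And>j. a j \<in> {0, 1}" and b01: "\<And>j. b j \<in> {0, 1}"
    and a_per: "\<And>j. a (j + n) = a j" and b_per: "\<And>j. b (j + n) = b j"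
    and a_nbrs: "\<And>j. even (a j + a (j + 2) + b (j + 1))"
    and b_nbrs: "\<And>j. even (b j + b (j + 2) + a (j + 1))"
    and count: "(\<Sum>j<n. a j) + (\<Sum>j<n. b j) = int n"
  shows False
proof -
  have triple: "even (a j + a (j + 2) + a (j + 4))" for j
  proof -
    have "even (b (j + 1) + b (j + 3) + a (j + 2))" "even (a (j + 2) + a (j + 4) + b (j + 3))"
      using b_nbrs[of "j + 1"] a_nbrs[of "j + 2"] by (simp_all add: eval_nat_numeral)
    with a_nbrs[of j] show ?thesis by presburger
  qed
  have b_a: "b (j + 1) = a (j + 4)" for j
  proof -
    have "even (b (j + 1) + a (j + 4))" using a_nbrs[of j] triple[of j] by presburger
    then show ?thesis using a01[of "j + 4"] b01[of "j + 1"] by auto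
  qed
  have a6: "a (j + 6) = a j" for j
  proof -
    have "even (a (j + 2) + a (j + 4) + a (j + 6))"
      using triple[of "j + 2"] by (simp add: eval_nat_numeral)
    with triple[of j] have "even (a j + a (j + 6))" by presburger
    then show ?thesis using a01[of j] a01[of "j + 6"] by auto
  qed
  have "b j = a (j + 3)" for j
  proof -
    have "b j = b (j + n - 1 + 1)" using b_per[of j] \<open>n > 0\<close> by simp
    also have "\<dots> = a (j + 3 + n)" using b_a[of "j + n - 1"] \<open>n > 0\<close> by (simp add: ac_simps)
    finally show ?thesis using a_per by simp
  qed
  then have "(\<Sum>j<n. b j) = (\<Sum>j<n. a j)"
    using sum_lessThan_shift_periodic[of a n 3] a_per by simp
  with count have half: "2 * (\<Sum>j<n. a j) = int n" by simp
  define w where "w = (\<Sum>k<6. a k)"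
  have "even w"
    using triple[of 0] triple[of 1] by (simp add: w_def eval_nat_numeral) presburger
  have "int n * w = (\<Sum>j<n. \<Sum>k<6. a (k + j))"
    using sum_lessThan_shift_periodic[of a 6] a6 by (simp add: w_def)
  also have "\<dots> = (\<Sum>k<6. \<Sum>j<n. a (j + k))" by (subst sum.swap) (simp add: add.commute)
  also have "\<dots> = 6 * (\<Sum>j<n. a j)" using sum_lessThan_shift_periodic[of a n] a_per by simp
  finally have "int n * w = int n * 3" using half by simp
  then have "w = 3" using \<open>n > 0\<close> by simp
  with \<open>even w\<close> show False by simp
qed

theorem theorem7:
  fixes n :: nat
  assumes "n \<ge> 3"
  shows "\<not> orientable_Zm_distance_magic (2 * n) (prism_vertices n) (prism_edge n)"
proof
  assume "orientable_Zm_distance_magic (2 * n) (prism_vertices n) (prism_edge n)"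
  then obtain A l where orient: "is_orientation (prism_vertices n) (prism_edge n) A"
    and magic: "directed_Zm_distance_magic_labeling (2 * n) (prism_vertices n) A l"
    unfolding orientable_Zm_distance_magic_def by blast
  have "n > 0" using assms by simp
  have nbrs_even: "even (l (i, j mod n) + l (i, (j + 2) mod n) + l (1 - i, (j + 1) mod n))"
    if "i \<le> 1" for i j
  proof -
    have "finite (prism_vertices n)" "(i, (j + 1) mod n) \<in> prism_vertices n"
      using \<open>n > 0\<close> that by (auto simp: prism_vertices_def)
    from sum_nbrs_label_even[OF orient prism_edge_sym this(1) \<open>n > 0\<close> magic this(2)]
    show ?thesis by (simp only: sum_prism_nbrs[OF assms that])
  qed
  define a where "a j = l (0, j mod n) mod 2" for j
  define b where "b j = l (1, j mod n) mod 2" for j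
  have "(\<Sum>j<n. a j) + (\<Sum>j<n. b j) = (\<Sum>x\<in>prism_vertices n. l x mod 2)"
    unfolding sum_prism_vertices a_def b_def by simp
  also have "\<dots> = int n"
    using sum_bij_betw_atLeastLessThan_int[of l _ "2 * n" "\<lambda>k. k mod 2"] magic
    by (simp add: directed_Zm_distance_magic_labeling_def sum_lessThan_double_mod_2)
  finally show False
    using prism_parity_pattern_impossible[OF \<open>n > 0\<close>, of a b] nbrs_even[of 0] nbrs_even[of 1]
    unfolding a_def b_def by simp presburger
qed

end
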